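(* Let $\Gamma$ be a finitely generated group equipped with the word metric associated with a finite generating set. Then $\Gamma$ has exponential growth if and only if $h_\infty(\Gamma)=\infty$ (and otherwise $h_\infty(\Gamma)=0$).
   Context: The word metric associated with a generating set $S$ is the path metric of the Cayley graph with vertex set $\Gamma$ and edges $\{\gamma,\gamma s\}$, $s\in S$. Non-decreasing functions $f,g\colon\mathbb N\to\mathbb N\cup\{\infty\}$ are equivalent if there is $D\in\mathbb N$ with $f(r)\le Dg(Dr)$ and $g(r)\le Df(Dr)$ for all $r$; $\Gamma$ has exponential growth if $r\mapsto|B(e,r)|$ is equivalent to $r\mapsto\exp(r)$. Coarse entropy $h_\infty(X)=\lim_{\delta\to\infty}\lim_{R\to\infty}\limsup_{n\to\infty}\frac1n\log s(n,R,\delta,x_0)$, where $s(n,R,\delta,x_0)$ is the supremum of cardinalities of $R$-separated sets of $\delta$-paths $(x_0,\dots,x_n)$ ($d(x_i,x_{i+1})\le\delta$) starting at $x_0$, paths compared by $\max_i d(x_i,y_i)$. *)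

theory Defs
  imports "HOL-Analysis.Analysis" "HOL-Algebra.Algebra" "HOL-Library.Liminf_Limsup"
begin

text \<open>Word metric of the Cayley graph of G w.r.t. S: vertex set carrier G,
  (undirected) edges {g, g s} with s in S. The distance is the length of a
  shortest edge path.\<close>
definition word_dist :: "('a, 'b) monoid_scheme \<Rightarrow> 'a set \<Rightarrow> 'a \<Rightarrow> 'a \<Rightarrow> nat" where
  "word_dist G S x y = (LEAST n. \<exists>f :: nat \<Rightarrow> 'a. f 0 = x \<and> f n = y \<and>
      (\<forall>i\<le>n. f i \<in> carrier G) \<and>
      (\<forall>i<n. \<exists>s\<in>S. f (Suc i) = f i \<otimes>\<^bsub>G\<^esub> s \<or> f i = f (Suc i) \<otimes>\<^bsub>G\<^esub> s))"

definition word_ball :: "('a, 'b) monoid_scheme \<Rightarrow> 'a set \<Rightarrow> nat \<Rightarrow> 'a set" where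
  "word_ball G S r = {g \<in> carrier G. word_dist G S \<one>\<^bsub>G\<^esub> g \<le> r}"

text \<open>Exponential growth: r \<mapsto> |B(e,r)| is equivalent to r \<mapsto> exp r, i.e. there
  is D \<in> \<nat> with f(r) \<le> D g(D r) and g(r) \<le> D f(D r) for all r.\<close>
definition exponential_growth :: "('a, 'b) monoid_scheme \<Rightarrow> 'a set \<Rightarrow> bool" where
  "exponential_growth G S \<longleftrightarrow> (\<exists>D::nat. \<forall>r::nat.
      real (card (word_ball G S r)) \<le> real D * exp (real (D * r)) \<and>
      exp (real r) \<le> real D * real (card (word_ball G S (D * r))))"

definition delta_paths :: "('a, 'b) monoid_scheme \<Rightarrow> 'a set \<Rightarrow> nat \<Rightarrow> real \<Rightarrow> 'a \<Rightarrow> 'a list set" where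
  "delta_paths G S n \<delta> x0 = {p. length p = Suc n \<and> set p \<subseteq> carrier G \<and> p ! 0 = x0 \<and>
      (\<forall>i<n. real (word_dist G S (p ! i) (p ! Suc i)) \<le> \<delta>)}"

definition path_separated :: "('a, 'b) monoid_scheme \<Rightarrow> 'a set \<Rightarrow> nat \<Rightarrow> real \<Rightarrow> 'a list set \<Rightarrow> bool" where
  "path_separated G S n R P \<longleftrightarrow> (\<forall>p\<in>P. \<forall>q\<in>P. p \<noteq> q \<longrightarrow>
      (\<exists>i\<le>n. R \<le> real (word_dist G S (p ! i) (q ! i))))"

definition sep_count :: "('a, 'b) monoid_scheme \<Rightarrow> 'a set \<Rightarrow> nat \<Rightarrow> real \<Rightarrow> real \<Rightarrow> 'a \<Rightarrow> ereal" where
  "sep_count G S n R \<delta> x0 = (SUP P \<in> {P. finite P \<and> P \<subseteq> delta_paths G S n \<delta> x0 \<and>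
      path_separated G S n R P}. ereal (real (card P)))"

definition eln :: "ereal \<Rightarrow> ereal" where
  "eln x = (if x = \<infinity> then \<infinity> else ereal (ln (real_of_ereal x)))"

definition coarse_entropy :: "('a, 'b) monoid_scheme \<Rightarrow> 'a set \<Rightarrow> ereal" where
  "coarse_entropy G S = Lim at_top (\<lambda>\<delta>::real. Lim at_top (\<lambda>R::real.
      limsup (\<lambda>n::nat. eln (sep_count G S n R \<delta> \<one>\<^bsub>G\<^esub>) / ereal (real n))))"

end

theory Submission
  imports Defs
begin

(*
  Separated families of delta-paths are controlled by word balls from both sides. Sampling a
  delta-path every k steps records n div k increments in the ball of radius k * ceil(delta), and two
  paths with the same increments stay within 2k * ceil(delta) of each other; hence
  s(n, R, delta) <= |B(k * ceil delta)| ^ (n div k) once R >= 2k * ceil(delta). Conversely, geodesics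
  from the identity to a maximal R-separated subset of B(n * floor delta), travelled at speed
  floor(delta), form an R-separated family, so s(n, R, delta) >= |B(n * floor delta)| / |B(ceil R)|.
  Under exponential growth the lower bound makes the entropy at scale delta at least floor(delta)/D,
  which is unbounded in delta. Otherwise, with c = ceil(delta), for every m some r has
  c m |B(c m r)| < e^r, and the upper bound with k = m r bounds the entropy at scale delta by 1/m.
*)

lemma antimono_tendsto_INF_at_top:
  fixes f :: "'a::linorder \<Rightarrow> 'b::{complete_linorder, linorder_topology}"
  assumes "\<And>x y. x \<le> y \<Longrightarrow> f y \<le> f x"
  shows "(f \<longlongrightarrow> (INF x. f x)) at_top"
proof (rule order_tendstoI)
  fix a assume "a < (INF x. f x)"
  then show "eventually (\<lambda>x. a < f x) at_top"
    by (meson INF_lower UNIV_I always_eventually order_less_le_trans)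
next
  fix a assume "(INF x. f x) < a"
  then obtain x where "f x < a" by (auto simp: INF_less_iff)
  then show "eventually (\<lambda>y. f y < a) at_top"
    using assms by (intro eventually_mono[OF eventually_ge_at_top[of x]]) (meson order_le_less_trans)
qed

lemma greedy_separated_subset:
  fixes d :: "'a \<Rightarrow> 'a \<Rightarrow> real"
  assumes "finite Y" and "\<And>x y. x \<in> Y \<Longrightarrow> y \<in> Y \<Longrightarrow> d x y = d y x"
  shows "\<exists>E\<subseteq>Y. (\<forall>e\<in>E. \<forall>e'\<in>E. e \<noteq> e' \<longrightarrow> R \<le> d e e') \<and>
    (\<forall>x\<in>Y. \<exists>e\<in>E. x = e \<or> d e x < R)"
  using assms
proof (induction rule: finite_induct)
  case empty
  then show ?case by auto
next
  case (insert x Y)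
  then obtain E where E: "E \<subseteq> Y" "\<forall>e\<in>E. \<forall>e'\<in>E. e \<noteq> e' \<longrightarrow> R \<le> d e e'"
      "\<forall>y\<in>Y. \<exists>e\<in>E. y = e \<or> d e y < R"
    by auto
  show ?case
  proof (cases "\<exists>e\<in>E. d e x < R")
    case True
    then show ?thesis using E by (intro exI[of _ E]) auto
  next
    case False
    then have "R \<le> d e x \<and> R \<le> d x e" if "e \<in> E" for e
      using that E(1) insert.prems by (auto simp: not_less)
    then show ?thesis using E by (intro exI[of _ "insert x E"]) auto
  qed
qed

lemma eln_nonneg: "1 \<le> x \<Longrightarrow> 0 \<le> eln x"
  unfolding eln_def by (cases x) auto

lemma eln_le: "1 \<le> x \<Longrightarrow> x \<le> ereal y \<Longrightarrow> eln x \<le> ereal (ln y)"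
  unfolding eln_def by (cases x) auto

lemma eln_ge: "0 < y \<Longrightarrow> ereal y \<le> x \<Longrightarrow> ereal (ln y) \<le> eln x"
  unfolding eln_def by (cases x) auto

lemma eln_mono: "1 \<le> x \<Longrightarrow> x \<le> y \<Longrightarrow> eln x \<le> eln y"
  unfolding eln_def by (cases x; cases y) auto

definition cayley_adj :: "('a, 'b) monoid_scheme \<Rightarrow> 'a set \<Rightarrow> 'a \<Rightarrow> 'a \<Rightarrow> bool" where
  "cayley_adj G S x y \<longleftrightarrow> x \<in> carrier G \<and> y \<in> carrier G \<and>
     (\<exists>s\<in>S. y = x \<otimes>\<^bsub>G\<^esub> s \<or> x = y \<otimes>\<^bsub>G\<^esub> s)"

lemma word_dist_relpowp:
  "word_dist G S x y = (LEAST n. x \<in> carrier G \<and> (cayley_adj G S ^^ n) x y)"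
proof -
  have "(\<exists>f :: nat \<Rightarrow> 'a. f 0 = x \<and> f n = y \<and> (\<forall>i\<le>n. f i \<in> carrier G) \<and>
      (\<forall>i<n. \<exists>s\<in>S. f (Suc i) = f i \<otimes>\<^bsub>G\<^esub> s \<or> f i = f (Suc i) \<otimes>\<^bsub>G\<^esub> s))
    \<longleftrightarrow> x \<in> carrier G \<and> (cayley_adj G S ^^ n) x y" for n
  proof
    assume "\<exists>f :: nat \<Rightarrow> 'a. f 0 = x \<and> f n = y \<and> (\<forall>i\<le>n. f i \<in> carrier G) \<and>
      (\<forall>i<n. \<exists>s\<in>S. f (Suc i) = f i \<otimes>\<^bsub>G\<^esub> s \<or> f i = f (Suc i) \<otimes>\<^bsub>G\<^esub> s)"
    then obtain f :: "nat \<Rightarrow> 'a" where f: "f 0 = x" "f n = y" "\<forall>i\<le>n. f i \<in> carrier G"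
       "\<forall>i<n. \<exists>s\<in>S. f (Suc i) = f i \<otimes>\<^bsub>G\<^esub> s \<or> f i = f (Suc i) \<otimes>\<^bsub>G\<^esub> s"
      by blast
    then have "\<forall>i<n. cayley_adj G S (f i) (f (Suc i))" unfolding cayley_adj_def by auto
    then show "x \<in> carrier G \<and> (cayley_adj G S ^^ n) x y"
      using f unfolding relpowp_fun_conv by auto
  next
    assume xy: "x \<in> carrier G \<and> (cayley_adj G S ^^ n) x y"
    then obtain f where f: "f 0 = x" "f n = y" "\<forall>i<n. cayley_adj G S (f i) (f (Suc i))"
      unfolding relpowp_fun_conv by auto
    have "f i \<in> carrier G" if "i \<le> n" for i
      using that f xy by (cases i) (auto simp: cayley_adj_def)
    then show "\<exists>f :: nat \<Rightarrow> 'a. f 0 = x \<and> f n = y \<and> (\<forall>i\<le>n. f i \<in> carrier G) \<and>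
        (\<forall>i<n. \<exists>s\<in>S. f (Suc i) = f i \<otimes>\<^bsub>G\<^esub> s \<or> f i = f (Suc i) \<otimes>\<^bsub>G\<^esub> s)"
      using f by (auto simp: cayley_adj_def)
  qed
  then show ?thesis unfolding word_dist_def by presburger
qed

definition sep_rate :: "('a, 'b) monoid_scheme \<Rightarrow> 'a set \<Rightarrow> real \<Rightarrow> real \<Rightarrow> nat \<Rightarrow> ereal" where
  "sep_rate G S \<delta> R n = eln (sep_count G S n R \<delta> \<one>\<^bsub>G\<^esub>) / ereal (real n)"

definition sep_growth :: "('a, 'b) monoid_scheme \<Rightarrow> 'a set \<Rightarrow> real \<Rightarrow> real \<Rightarrow> ereal" where
  "sep_growth G S \<delta> R = limsup (sep_rate G S \<delta> R)"

lemma coarse_entropy_sep_growth: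
  "coarse_entropy G S = Lim at_top (\<lambda>\<delta>. Lim at_top (sep_growth G S \<delta>))"
  unfolding coarse_entropy_def sep_growth_def sep_rate_def ..

lemma card_le_sep_count:
  "finite P \<Longrightarrow> P \<subseteq> delta_paths G S n \<delta> x0 \<Longrightarrow> path_separated G S n R P \<Longrightarrow>
    ereal (real (card P)) \<le> sep_count G S n R \<delta> x0"
  unfolding sep_count_def by (intro SUP_upper) auto

lemma sep_count_antimono:
  assumes "R \<le> R'"
  shows "sep_count G S n R' \<delta> x0 \<le> sep_count G S n R \<delta> x0"
proof -
  have "path_separated G S n R P" if "path_separated G S n R' P" for P
    using that assms unfolding path_separated_def by force
  then show ?thesis unfolding sep_count_def by (intro SUP_subset_mono) auto
qed

locale word_metric = group G for G (structure) +
  fixes S :: "'a set"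
  assumes finite_gens: "finite S" and gens_carrier: "S \<subseteq> carrier G"
    and generate_gens: "generate G S = carrier G"
begin

abbreviation "A \<equiv> cayley_adj G S"
abbreviation "d \<equiv> word_dist G S"
abbreviation "B \<equiv> word_ball G S"

lemma adj_sym: "A x y \<Longrightarrow> A y x"
  unfolding cayley_adj_def by blast

lemma relpowp_adj_sym: "(A ^^ n) x y \<Longrightarrow> (A ^^ n) y x"
proof (induction n arbitrary: y)
  case 0
  then show ?case by auto
next
  case (Suc n)
  then obtain z where "(A ^^ n) x z" "A z y" by (auto elim: relpowp_Suc_E)
  then show ?case using Suc.IH by (meson adj_sym relpowp_Suc_I2)
qed

lemma relpowp_adj_carrier: "(A ^^ n) x y \<Longrightarrow> x \<in> carrier G \<Longrightarrow> y \<in> carrier G"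
  by (cases n) (auto elim!: relpowp_Suc_E simp: cayley_adj_def)

lemma adj_mult_left:
  assumes e: "e \<in> carrier G" and "A x y"
  shows "A (e \<otimes> x) (e \<otimes> y)"
proof -
  obtain s where s: "s \<in> S" "y = x \<otimes> s \<or> x = y \<otimes> s" and xy: "x \<in> carrier G" "y \<in> carrier G"
    using \<open>A x y\<close> unfolding cayley_adj_def by auto
  then have "e \<otimes> y = (e \<otimes> x) \<otimes> s \<or> e \<otimes> x = (e \<otimes> y) \<otimes> s"
    using e gens_carrier by (auto simp: m_assoc)
  then show ?thesis unfolding cayley_adj_def using e xy s(1) by auto
qed

lemma relpowp_adj_mult_left:
  "e \<in> carrier G \<Longrightarrow> (A ^^ n) x y \<Longrightarrow> (A ^^ n) (e \<otimes> x) (e \<otimes> y)"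
proof (induction n arbitrary: y)
  case 0
  then show ?case by auto
next
  case (Suc n)
  then obtain z where "(A ^^ n) x z" "A z y" by (auto elim: relpowp_Suc_E)
  then show ?case using Suc adj_mult_left by (meson relpowp_Suc_I)
qed

lemma relpowp_adj_from_one: "g \<in> carrier G \<Longrightarrow> \<exists>n. (A ^^ n) \<one> g"
proof -
  assume "g \<in> carrier G"
  then have "g \<in> generate G S" using generate_gens by simp
  then show ?thesis
  proof (induction rule: generate.induct)
    case one
    then show ?case by (metis relpowp_0_I)
  next
    case (incl h)
    then have "A \<one> h" using gens_carrier unfolding cayley_adj_def by force
    then show ?case by (metis relpowp_1)
  next
    case (inv h)
    then have "A \<one> (inv h)" using gens_carrier unfolding cayley_adj_def by force
    then show ?case by (metis relpowp_1)
  next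
    case (eng h1 h2)
    then obtain n1 n2 where "(A ^^ n1) \<one> h1" "(A ^^ n2) \<one> h2" by blast
    moreover have "h1 \<in> carrier G" using eng.hyps generate_gens by auto
    ultimately have "(A ^^ n1) \<one> h1" "(A ^^ n2) h1 (h1 \<otimes> h2)"
      using relpowp_adj_mult_left[of h1 n2 \<one> h2] by auto
    then show ?case using relpowp_trans by metis
  qed
qed

lemma relpowp_word_dist: "x \<in> carrier G \<Longrightarrow> y \<in> carrier G \<Longrightarrow> (A ^^ d x y) x y"
proof -
  assume xy: "x \<in> carrier G" "y \<in> carrier G"
  then obtain n where "(A ^^ n) \<one> (inv x \<otimes> y)" using relpowp_adj_from_one by blast
  from relpowp_adj_mult_left[OF xy(1) this] have "(A ^^ n) x y"
    using xy by (simp add: m_assoc[symmetric])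
  then show ?thesis
    unfolding word_dist_relpowp using xy by (metis (mono_tags, lifting) LeastI_ex)
qed

lemma word_dist_le: "x \<in> carrier G \<Longrightarrow> (A ^^ n) x y \<Longrightarrow> d x y \<le> n"
  unfolding word_dist_relpowp by (simp add: Least_le)

lemma word_dist_self: "x \<in> carrier G \<Longrightarrow> d x x = 0"
  unfolding word_dist_relpowp by (simp add: Least_eq_0)

lemma word_dist_sym: "x \<in> carrier G \<Longrightarrow> y \<in> carrier G \<Longrightarrow> d x y = d y x"
  by (meson antisym word_dist_le relpowp_word_dist relpowp_adj_sym)

lemma word_dist_triangle:
  "x \<in> carrier G \<Longrightarrow> y \<in> carrier G \<Longrightarrow> z \<in> carrier G \<Longrightarrow> d x z \<le> d x y + d y z"
  by (meson word_dist_le relpowp_word_dist relpowp_trans)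

lemma word_dist_mult_left:
  assumes "e \<in> carrier G" "x \<in> carrier G" "y \<in> carrier G"
  shows "d (e \<otimes> x) (e \<otimes> y) = d x y"
proof (rule antisym)
  show "d (e \<otimes> x) (e \<otimes> y) \<le> d x y"
    using assms by (meson word_dist_le relpowp_word_dist m_closed relpowp_adj_mult_left)
  have "(A ^^ d (e \<otimes> x) (e \<otimes> y)) (inv e \<otimes> (e \<otimes> x)) (inv e \<otimes> (e \<otimes> y))"
    using assms by (meson relpowp_word_dist m_closed relpowp_adj_mult_left inv_closed)
  then show "d x y \<le> d (e \<otimes> x) (e \<otimes> y)"
    using assms word_dist_le by (simp add: m_assoc[symmetric])
qed

lemma word_dist_one_inv_mult: "x \<in> carrier G \<Longrightarrow> y \<in> carrier G \<Longrightarrow> d \<one> (inv x \<otimes> y) = d x y"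
  using word_dist_mult_left[of "inv x" x y] by simp

lemma one_in_word_ball: "\<one> \<in> B r"
  unfolding word_ball_def using word_dist_self by simp

lemma word_ball_0: "B 0 = {\<one>}"
  using one_in_word_ball relpowp_word_dist[OF one_closed]
  unfolding word_ball_def by fastforce

lemma word_ball_mono: "r \<le> r' \<Longrightarrow> B r \<subseteq> B r'"
  unfolding word_ball_def by auto

lemma word_ball_Suc_subset:
  "B (Suc r) \<subseteq> (\<lambda>(g, s). g \<otimes> s) ` (B r \<times> insert \<one> (S \<union> (\<lambda>s. inv s) ` S))"
proof
  fix g assume g: "g \<in> B (Suc r)"
  then have gc: "g \<in> carrier G" and dg: "d \<one> g \<le> Suc r" unfolding word_ball_def by auto
  show "g \<in> (\<lambda>(g, s). g \<otimes> s) ` (B r \<times> insert \<one> (S \<union> (\<lambda>s. inv s) ` S))"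
  proof (cases "d \<one> g")
    case 0
    then have "g = \<one>" using relpowp_word_dist[OF one_closed gc] by simp
    then show ?thesis using one_in_word_ball by force
  next
    case (Suc m)
    then obtain z where z: "(A ^^ m) \<one> z" "A z g"
      using relpowp_word_dist[OF one_closed gc] by (auto elim: relpowp_Suc_E)
    have "z \<in> B r"
      using z(1) word_dist_le[OF one_closed z(1)] relpowp_adj_carrier[OF z(1)] dg Suc
      unfolding word_ball_def by auto
    moreover obtain s where s: "s \<in> S" "g = z \<otimes> s \<or> z = g \<otimes> s" and "z \<in> carrier G"
      using z(2) unfolding cayley_adj_def by auto
    then have "g = z \<otimes> s \<or> g = z \<otimes> inv s"
      using gc gens_carrier by (metis inv_solve_right subsetD)
    ultimately show ?thesis using s(1) by blast
  qed
qed

lemma finite_word_ball: "finite (B r)"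
  by (induction r) (auto simp: word_ball_0 finite_gens intro: finite_subset[OF word_ball_Suc_subset])

lemma card_word_ball_le_power: "card (B r) \<le> (1 + 2 * card S) ^ r"
proof (induction r)
  case 0
  then show ?case by (simp add: word_ball_0)
next
  case (Suc r)
  let ?T = "insert \<one> (S \<union> (\<lambda>s. inv s) ` S)"
  have "card ?T \<le> Suc (card (S \<union> (\<lambda>s. inv s) ` S))"
    by (simp add: card_insert_if finite_gens)
  also have "card (S \<union> (\<lambda>s. inv s) ` S) \<le> card S + card S"
    using card_Un_le card_image_le[OF finite_gens] by (meson add_left_mono order_trans)
  finally have T: "card ?T \<le> 1 + 2 * card S" by simp
  have fin: "finite (B r \<times> ?T)" using finite_word_ball finite_gens by simp
  then have "card (B (Suc r)) \<le> card ((\<lambda>(g, s). g \<otimes> s) ` (B r \<times> ?T))"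
    using word_ball_Suc_subset by (intro card_mono) auto
  also have "\<dots> \<le> card (B r \<times> ?T)" using fin by (rule card_image_le)
  also have "\<dots> \<le> card (B r) * (1 + 2 * card S)"
    unfolding card_cartesian_product using T by (rule mult_left_mono) simp
  also have "\<dots> \<le> (1 + 2 * card S) ^ Suc r"
    using Suc.IH by (metis mult_le_mono1 power_Suc mult.commute)
  finally show ?case .
qed


lemma card_word_ball_pos: "1 \<le> card (B r)"
  using one_in_word_ball finite_word_ball by (metis One_nat_def Suc_leI card_gt_0_iff empty_iff)

lemma card_word_ball_mono: "r \<le> r' \<Longrightarrow> card (B r) \<le> card (B r')"
  by (simp add: finite_word_ball word_ball_mono card_mono)

lemma card_word_ball_le_exp:
  assumes "ln (1 + 2 * real (card S)) \<le> real D" and "1 \<le> D"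
  shows "real (card (B r)) \<le> real D * exp (real (D * r))"
proof -
  let ?M = "1 + 2 * real (card S)"
  have "real (card (B r)) \<le> ?M ^ r"
    using card_word_ball_le_power[of r, folded of_nat_le_iff[where 'a=real]] by simp
  also have "\<dots> = exp (real r * ln ?M)"
    by (simp add: exp_of_nat_mult add_pos_nonneg)
  also have "\<dots> \<le> exp (real (D * r))"
    using mult_left_mono[OF assms(1), of "real r"] by (simp add: mult.commute)
  also have "\<dots> \<le> real D * exp (real (D * r))"
    using assms(2) by simp
  finally show ?thesis .
qed

lemma exponential_growth_iff:
  "exponential_growth G S \<longleftrightarrow> (\<exists>D. \<forall>r. exp (real r) \<le> real D * real (card (B (D * r))))"
proof
  assume "exponential_growth G S"
  then show "\<exists>D. \<forall>r. exp (real r) \<le> real D * real (card (B (D * r)))"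
    unfolding exponential_growth_def by blast
next
  assume "\<exists>D. \<forall>r. exp (real r) \<le> real D * real (card (B (D * r)))"
  then obtain D1 where D1: "\<And>r. exp (real r) \<le> real D1 * real (card (B (D1 * r)))"
    by blast
  define D where "D = max D1 (max 1 (nat \<lceil>ln (1 + 2 * real (card S))\<rceil>))"
  have "exp (real r) \<le> real D * real (card (B (D * r)))" for r
  proof -
    have "real D1 * real (card (B (D1 * r))) \<le> real D * real (card (B (D * r)))"
      by (intro mult_mono) (simp_all add: D_def card_word_ball_mono)
    then show ?thesis using D1[of r] by linarith
  qed
  moreover have "real (card (B r)) \<le> real D * exp (real (D * r))" for r
    by (rule card_word_ball_le_exp) (simp_all add: D_def, linarith)
  ultimately show "exponential_growth G S"
    unfolding exponential_growth_def by blast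
qed

lemma delta_path_nth_carrier: "p \<in> delta_paths G S n \<delta> x0 \<Longrightarrow> i \<le> n \<Longrightarrow> p ! i \<in> carrier G"
  unfolding delta_paths_def by (auto dest!: nth_mem[of i p])

lemma delta_path_dist:
  assumes p: "p \<in> delta_paths G S n \<delta> x0" and "i \<le> j" "j \<le> n"
  shows "d (p ! i) (p ! j) \<le> (j - i) * nat \<lceil>\<delta>\<rceil>"
  using \<open>i \<le> j\<close> \<open>j \<le> n\<close>
proof (induction j)
  case 0
  then show ?case using word_dist_self delta_path_nth_carrier[OF p] by simp
next
  case (Suc j)
  show ?case
  proof (cases "i = Suc j")
    case True
    then show ?thesis using word_dist_self delta_path_nth_carrier[OF p] Suc by simp
  next
    case False
    then have ij: "i \<le> j" "j < n" using Suc by auto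
    have "real (d (p ! j) (p ! Suc j)) \<le> \<delta>" using p ij unfolding delta_paths_def by auto
    then have step: "d (p ! j) (p ! Suc j) \<le> nat \<lceil>\<delta>\<rceil>" by linarith
    have "d (p ! i) (p ! Suc j) \<le> d (p ! i) (p ! j) + d (p ! j) (p ! Suc j)"
      using delta_path_nth_carrier[OF p] ij by (intro word_dist_triangle) auto
    also have "\<dots> \<le> (Suc j - i) * nat \<lceil>\<delta>\<rceil>"
      using Suc.IH ij step by (simp add: Suc_diff_le)
    finally show ?thesis .
  qed
qed

lemma delta_paths_samples_eq:
  assumes p: "p \<in> delta_paths G S n \<delta> x0" and q: "q \<in> delta_paths G S n \<delta> x0"
    and incr: "\<And>j. Suc j * k \<le> n \<Longrightarrow>
       inv (p ! (j * k)) \<otimes> p ! (Suc j * k) = inv (q ! (j * k)) \<otimes> q ! (Suc j * k)"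
    and "j * k \<le> n"
  shows "p ! (j * k) = q ! (j * k)"
  using \<open>j * k \<le> n\<close>
proof (induction j)
  case 0
  then show ?case using p q unfolding delta_paths_def by simp
next
  case (Suc j)
  have "j * k \<le> n" using Suc.prems by (meson le_trans mult_le_mono1 le_SucI order_refl)
  then have "p ! (j * k) = q ! (j * k)" by (rule Suc.IH)
  moreover have "p ! (j * k) \<in> carrier G" "p ! (Suc j * k) \<in> carrier G" "q ! (Suc j * k) \<in> carrier G"
    using delta_path_nth_carrier[OF p] delta_path_nth_carrier[OF q] Suc.prems \<open>j * k \<le> n\<close> by auto
  ultimately show ?case using incr[OF Suc.prems] by (metis inv_closed l_cancel)
qed

lemma delta_paths_close:
  assumes p: "p \<in> delta_paths G S n \<delta> x0" and q: "q \<in> delta_paths G S n \<delta> x0"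
    and "0 < \<delta>" "1 \<le> k"
    and samples: "\<And>j. j * k \<le> n \<Longrightarrow> p ! (j * k) = q ! (j * k)"
    and "i \<le> n"
  shows "d (p ! i) (q ! i) < 2 * k * nat \<lceil>\<delta>\<rceil>"
proof -
  define j where "j = i div k"
  have ji: "j * k \<le> i" unfolding j_def by simp
  have "i - j * k = i mod k" unfolding j_def by (simp add: minus_div_mult_eq_mod)
  then have "i - j * k < k" using \<open>1 \<le> k\<close> by simp
  then have less: "(i - j * k) * nat \<lceil>\<delta>\<rceil> < k * nat \<lceil>\<delta>\<rceil>"
    using \<open>0 < \<delta>\<close> by (intro mult_strict_right_mono) auto
  have c: "p ! i \<in> carrier G" "q ! i \<in> carrier G" "p ! (j * k) \<in> carrier G"
    using delta_path_nth_carrier[OF p] delta_path_nth_carrier[OF q] ji \<open>i \<le> n\<close> by auto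
  have "d (p ! i) (q ! i) \<le> d (p ! (j * k)) (p ! i) + d (q ! (j * k)) (q ! i)"
    using c word_dist_triangle[of "p ! i" "p ! (j * k)" "q ! i"] word_dist_sym
      samples[of j] ji \<open>i \<le> n\<close> by auto
  also have "\<dots> \<le> (i - j * k) * nat \<lceil>\<delta>\<rceil> + (i - j * k) * nat \<lceil>\<delta>\<rceil>"
    using delta_path_dist[OF p ji \<open>i \<le> n\<close>] delta_path_dist[OF q ji \<open>i \<le> n\<close>] by simp
  also have "\<dots> < 2 * k * nat \<lceil>\<delta>\<rceil>" by (metis add_strict_mono less mult_2 mult.assoc)
  finally show ?thesis .
qed

lemma card_separated_delta_paths_le:
  assumes "1 \<le> k" and "0 < \<delta>" and R: "real (2 * k * nat \<lceil>\<delta>\<rceil>) \<le> R"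
    and P: "finite P" "P \<subseteq> delta_paths G S n \<delta> x0" "path_separated G S n R P"
  shows "card P \<le> card (B (k * nat \<lceil>\<delta>\<rceil>)) ^ (n div k)"
proof -
  define incr where "incr p = map (\<lambda>j. inv (p ! (j * k)) \<otimes> p ! (Suc j * k)) [0..<n div k]" for p
  have below: "j < n div k \<longleftrightarrow> Suc j * k \<le> n" for j
    using \<open>1 \<le> k\<close> less_eq_div_iff_mult_less_eq[of k "Suc j" n] by (simp add: Suc_le_eq)
  have into: "incr ` P \<subseteq> {xs. set xs \<subseteq> B (k * nat \<lceil>\<delta>\<rceil>) \<and> length xs = n div k}"
  proof clarify
    fix p assume "p \<in> P"
    then have p: "p \<in> delta_paths G S n \<delta> x0" using P by auto
    have "inv (p ! (j * k)) \<otimes> p ! (Suc j * k) \<in> B (k * nat \<lceil>\<delta>\<rceil>)" if "Suc j * k \<le> n" for j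
      using delta_path_dist[OF p _ that, of "j * k"] delta_path_nth_carrier[OF p] that
        word_dist_one_inv_mult unfolding word_ball_def by (auto simp: mult.commute)
    then show "set (incr p) \<subseteq> B (k * nat \<lceil>\<delta>\<rceil>) \<and> length (incr p) = n div k"
      unfolding incr_def using below by auto
  qed
  have inj: "inj_on incr P"
  proof (rule inj_onI, rule ccontr)
    fix p q assume "p \<in> P" "q \<in> P" "incr p = incr q" "p \<noteq> q"
    then have pq: "p \<in> delta_paths G S n \<delta> x0" "q \<in> delta_paths G S n \<delta> x0" using P by auto
    have samples: "p ! (j * k) = q ! (j * k)" if "j * k \<le> n" for j
    proof (rule delta_paths_samples_eq[OF pq _ that])
      fix j assume "Suc j * k \<le> n"
      then show "inv (p ! (j * k)) \<otimes> p ! (Suc j * k) = inv (q ! (j * k)) \<otimes> q ! (Suc j * k)"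
        using arg_cong[OF \<open>incr p = incr q\<close>, of "\<lambda>xs. xs ! j"] below unfolding incr_def by simp
    qed
    then have "real (d (p ! i) (q ! i)) < R" if "i \<le> n" for i
      using delta_paths_close[OF pq \<open>0 < \<delta>\<close> \<open>1 \<le> k\<close> samples that] R by linarith
    then show False
      using P(3) \<open>p \<in> P\<close> \<open>q \<in> P\<close> \<open>p \<noteq> q\<close> unfolding path_separated_def by (meson not_le)
  qed
  have "card P = card (incr ` P)" using inj by (simp add: card_image)
  also have "\<dots> \<le> card {xs. set xs \<subseteq> B (k * nat \<lceil>\<delta>\<rceil>) \<and> length xs = n div k}"
    using into by (intro card_mono) (simp_all add: finite_lists_length_eq finite_word_ball)
  finally show ?thesis by (simp add: card_lists_length_eq finite_word_ball)
qed

lemma relpowp_adj_path: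
  assumes "(A ^^ L) x y" and "x \<in> carrier G"
  obtains f where "f 0 = x" "f L = y" "\<And>i. i \<le> L \<Longrightarrow> f i \<in> carrier G"
    "\<And>a b. a \<le> b \<Longrightarrow> b \<le> L \<Longrightarrow> d (f a) (f b) \<le> b - a"
proof -
  obtain f where f: "f 0 = x" "f L = y" "\<forall>i<L. A (f i) (f (Suc i))"
    using assms(1) unfolding relpowp_fun_conv by blast
  have seg: "(A ^^ (b - a)) (f a) (f b)" if "a \<le> b" "b \<le> L" for a b
    using that
  proof (induction b)
    case 0
    then show ?case by simp
  next
    case (Suc b)
    show ?case
    proof (cases "a = Suc b")
      case True
      then show ?thesis by simp
    next
      case False
      then have "a \<le> b" "b < L" using Suc.prems by auto
      then have "(A ^^ Suc (b - a)) (f a) (f (Suc b))"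
        using Suc.IH f(3) by (auto intro: relpowp_Suc_I)
      then show ?thesis using \<open>a \<le> b\<close> by (simp add: Suc_diff_le)
    qed
  qed
  have carrier: "f i \<in> carrier G" if "i \<le> L" for i
    using seg[of 0 i] that f(1) assms(2) relpowp_adj_carrier by auto
  have "d (f a) (f b) \<le> b - a" if "a \<le> b" "b \<le> L" for a b
    using word_dist_le[OF carrier seg[OF that]] that by simp
  with f(1,2) carrier show ?thesis using that by blast
qed

lemma geodesic_delta_path:
  assumes "e \<in> B (n * nat \<lfloor>\<delta>\<rfloor>)" and "0 \<le> \<delta>"
  shows "\<exists>p \<in> delta_paths G S n \<delta> \<one>. p ! n = e"
proof -
  define c where "c = nat \<lfloor>\<delta>\<rfloor>"
  define L where "L = d \<one> e"
  have e: "e \<in> carrier G" "L \<le> n * c" using assms(1) unfolding word_ball_def L_def c_def by auto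
  obtain f where f: "f 0 = \<one>" "f L = e" "\<And>i. i \<le> L \<Longrightarrow> f i \<in> carrier G"
      "\<And>a b. a \<le> b \<Longrightarrow> b \<le> L \<Longrightarrow> d (f a) (f b) \<le> b - a"
    using relpowp_adj_path[OF relpowp_word_dist[OF one_closed e(1)] one_closed] unfolding L_def by blast
  define p where "p = map (\<lambda>i. f (min (i * c) L)) [0..<Suc n]"
  have nth: "p ! i = f (min (i * c) L)" if "i \<le> n" for i
    unfolding p_def using that by (simp del: upt_Suc add: nth_map_upt)
  have "real (d (p ! i) (p ! Suc i)) \<le> \<delta>" if "i < n" for i
  proof -
    have "min (i * c) L \<le> min (Suc i * c) L" by (simp add: min_def)
    then have "d (p ! i) (p ! Suc i) \<le> min (Suc i * c) L - min (i * c) L"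
      using nth[of i] nth[of "Suc i"] f(4) that by simp
    also have "\<dots> \<le> c" by (simp add: min_def) linarith
    finally show ?thesis unfolding c_def using \<open>0 \<le> \<delta>\<close> by linarith
  qed
  moreover have "set p \<subseteq> carrier G" unfolding p_def using f(3) by auto
  moreover have "p ! 0 = \<one>" "p ! n = e"
    using nth[of 0] nth[of n] f(1,2) e(2) by (simp_all add: min_def mult.commute)
  moreover have "length p = Suc n" unfolding p_def by simp
  ultimately show ?thesis unfolding delta_paths_def by blast
qed

lemma separated_net_word_ball:
  "\<exists>E \<subseteq> B N. (\<forall>e\<in>E. \<forall>e'\<in>E. e \<noteq> e' \<longrightarrow> R \<le> real (d e e')) \<and>
     card (B N) \<le> card E * card (B (nat \<lceil>R\<rceil>))"
proof -
  obtain E where E: "E \<subseteq> B N" "\<forall>e\<in>E. \<forall>e'\<in>E. e \<noteq> e' \<longrightarrow> R \<le> real (d e e')"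
      and covers: "\<forall>g\<in>B N. \<exists>e\<in>E. g = e \<or> real (d e g) < R"
    using greedy_separated_subset[OF finite_word_ball[of N], where d="\<lambda>x y. real (d x y)" and R=R]
      word_dist_sym unfolding word_ball_def by auto
  have fin: "finite E" using E(1) finite_word_ball by (rule finite_subset)
  have Ec: "e \<in> carrier G" if "e \<in> E" for e using that E(1) unfolding word_ball_def by auto
  have "B N \<subseteq> (\<Union>e\<in>E. (\<lambda>x. e \<otimes> x) ` B (nat \<lceil>R\<rceil>))"
  proof
    fix g assume g: "g \<in> B N"
    then obtain e where e: "e \<in> E" "g = e \<or> real (d e g) < R" using covers by blast
    have gc: "g \<in> carrier G" using g unfolding word_ball_def by auto
    have "inv e \<otimes> g \<in> B (nat \<lceil>R\<rceil>)"
      using e(2) word_dist_one_inv_mult[OF Ec[OF e(1)] gc] word_dist_self[OF gc] gc Ec[OF e(1)]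
      unfolding word_ball_def by (auto, linarith)
    moreover have "g = e \<otimes> (inv e \<otimes> g)" using Ec[OF e(1)] gc by (simp add: m_assoc[symmetric])
    ultimately show "g \<in> (\<Union>e\<in>E. (\<lambda>x. e \<otimes> x) ` B (nat \<lceil>R\<rceil>))" using e(1) by blast
  qed
  then have "card (B N) \<le> card (\<Union>e\<in>E. (\<lambda>x. e \<otimes> x) ` B (nat \<lceil>R\<rceil>))"
    using fin finite_word_ball by (intro card_mono) auto
  also have "\<dots> \<le> (\<Sum>e\<in>E. card ((\<lambda>x. e \<otimes> x) ` B (nat \<lceil>R\<rceil>)))"
    using fin by (rule card_UN_le)
  also have "\<dots> \<le> (\<Sum>e\<in>E. card (B (nat \<lceil>R\<rceil>)))"
    by (intro sum_mono card_image_le finite_word_ball)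
  also have "\<dots> = card E * card (B (nat \<lceil>R\<rceil>))" by simp
  finally show ?thesis using E by blast
qed

lemma separated_delta_paths_exist:
  assumes "0 \<le> \<delta>"
  shows "\<exists>P. finite P \<and> P \<subseteq> delta_paths G S n \<delta> \<one> \<and> path_separated G S n R P \<and>
     card (B (n * nat \<lfloor>\<delta>\<rfloor>)) \<le> card P * card (B (nat \<lceil>R\<rceil>))"
proof -
  obtain E where E: "E \<subseteq> B (n * nat \<lfloor>\<delta>\<rfloor>)" "\<forall>e\<in>E. \<forall>e'\<in>E. e \<noteq> e' \<longrightarrow> R \<le> real (d e e')"
      "card (B (n * nat \<lfloor>\<delta>\<rfloor>)) \<le> card E * card (B (nat \<lceil>R\<rceil>))"
    using separated_net_word_ball[of "n * nat \<lfloor>\<delta>\<rfloor>" R] by blast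
  have "\<forall>e\<in>E. \<exists>p. p \<in> delta_paths G S n \<delta> \<one> \<and> p ! n = e"
    using geodesic_delta_path[OF _ assms] E(1) by blast
  then obtain path where path: "\<forall>e\<in>E. path e \<in> delta_paths G S n \<delta> \<one> \<and> path e ! n = e"
    by (rule bchoice[elim_format]) blast
  then have path_mem: "path ` E \<subseteq> delta_paths G S n \<delta> \<one>" by blast
  have path_end: "path e ! n = e" if "e \<in> E" for e using path that by blast
  have "inj_on path E"
  proof (rule inj_onI)
    fix e e' assume "e \<in> E" "e' \<in> E" "path e = path e'"
    then show "e = e'" using path_end by metis
  qed
  then have card_eq: "card (path ` E) = card E" by (rule card_image)
  have "path_separated G S n R (path ` E)"
    unfolding path_separated_def
  proof (intro ballI impI)
    fix p q assume "p \<in> path ` E" "q \<in> path ` E" "p \<noteq> q"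
    then obtain e e' where "e \<in> E" "e' \<in> E" "p = path e" "q = path e'" "e \<noteq> e'" by blast
    then show "\<exists>i\<le>n. R \<le> real (d (p ! i) (q ! i))"
      using path_end E(2) by (intro exI[of _ n]) simp
  qed
  moreover have "finite (path ` E)" using E(1) finite_word_ball by (meson finite_subset finite_imageI)
  ultimately show ?thesis using E(3) path_mem card_eq by (intro exI[of _ "path ` E"]) simp
qed

lemma sep_count_ge_1:
  assumes "0 \<le> \<delta>" and "x0 \<in> carrier G"
  shows "1 \<le> sep_count G S n R \<delta> x0"
proof -
  let ?p = "replicate (Suc n) x0"
  have "?p \<in> delta_paths G S n \<delta> x0"
    unfolding delta_paths_def using assms word_dist_self by (auto simp del: replicate_Suc)
  moreover have "path_separated G S n R {?p}" unfolding path_separated_def by auto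
  ultimately have "ereal (real (card {?p})) \<le> sep_count G S n R \<delta> x0"
    by (intro card_le_sep_count) auto
  then show ?thesis by (simp add: one_ereal_def)
qed

lemma sep_rate_nonneg: "0 \<le> \<delta> \<Longrightarrow> 0 \<le> sep_rate G S \<delta> R n"
  unfolding sep_rate_def divide_ereal_def
  using eln_nonneg[OF sep_count_ge_1[OF _ one_closed]] by (simp add: inverse_ereal_ge0I)

lemma sep_growth_nonneg: "0 \<le> \<delta> \<Longrightarrow> 0 \<le> sep_growth G S \<delta> R"
  unfolding sep_growth_def by (intro le_Limsup always_eventually allI sep_rate_nonneg) auto

lemma sep_growth_antimono:
  assumes "0 \<le> \<delta>" and "R \<le> R'"
  shows "sep_growth G S \<delta> R' \<le> sep_growth G S \<delta> R"
  unfolding sep_growth_def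
proof (intro Limsup_mono always_eventually allI)
  fix n
  have "eln (sep_count G S n R' \<delta> \<one>) \<le> eln (sep_count G S n R \<delta> \<one>)"
    using sep_count_ge_1[OF assms(1) one_closed] sep_count_antimono[OF assms(2)] by (rule eln_mono)
  then show "sep_rate G S \<delta> R' n \<le> sep_rate G S \<delta> R n"
    unfolding sep_rate_def divide_ereal_def by (intro ereal_mult_right_mono inverse_ereal_ge0I) auto
qed

lemma Lim_sep_growth: "0 \<le> \<delta> \<Longrightarrow> Lim at_top (sep_growth G S \<delta>) = (INF R. sep_growth G S \<delta> R)"
  by (intro tendsto_Lim antimono_tendsto_INF_at_top sep_growth_antimono) auto

lemma sep_rate_le:
  assumes "1 \<le> k" and "0 < \<delta>" and "real (2 * k * nat \<lceil>\<delta>\<rceil>) \<le> R" and "1 \<le> n"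
  shows "sep_rate G S \<delta> R n \<le> ereal (ln (real (card (B (k * nat \<lceil>\<delta>\<rceil>)))) / real k)"
proof -
  define N where "N = real (card (B (k * nat \<lceil>\<delta>\<rceil>)))"
  have N: "1 \<le> N" unfolding N_def using card_word_ball_pos by simp
  have "sep_count G S n R \<delta> \<one> \<le> ereal (N ^ (n div k))"
    unfolding sep_count_def N_def using card_separated_delta_paths_le[OF assms(1-3)]
    by (intro SUP_least) (auto simp del: of_nat_power simp: of_nat_power[symmetric])
  then have "eln (sep_count G S n R \<delta> \<one>) \<le> ereal (ln (N ^ (n div k)))"
    using assms(2) by (intro eln_le sep_count_ge_1) auto
  also have "ln (N ^ (n div k)) = real (n div k) * ln N" using N by (simp add: ln_realpow)
  finally have "eln (sep_count G S n R \<delta> \<one>) \<le> ereal (real (n div k) * ln N)" .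
  then have "sep_rate G S \<delta> R n \<le> ereal (real (n div k) * ln N) / ereal (real n)"
    unfolding sep_rate_def using \<open>1 \<le> n\<close> by (intro ereal_divide_right_mono) auto
  also have "\<dots> \<le> ereal (ln N / real k)"
  proof -
    have "real (n div k) * real k \<le> real n"
      by (metis of_nat_le_iff of_nat_mult div_times_less_eq_dividend)
    then have "real (n div k) \<le> real n / real k" using \<open>1 \<le> k\<close> by (simp add: field_simps)
    then have "real (n div k) * ln N \<le> real n / real k * ln N" using N by (intro mult_right_mono) auto
    then show ?thesis using \<open>1 \<le> n\<close> by (simp add: field_simps)
  qed
  finally show ?thesis unfolding N_def .
qed

lemma sep_growth_le:
  assumes "1 \<le> k" and "0 < \<delta>" and "real (2 * k * nat \<lceil>\<delta>\<rceil>) \<le> R"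
  shows "sep_growth G S \<delta> R \<le> ereal (ln (real (card (B (k * nat \<lceil>\<delta>\<rceil>)))) / real k)"
  unfolding sep_growth_def using sep_rate_le[OF assms]
  by (intro Limsup_bounded eventually_mono[OF eventually_ge_at_top[of 1]]) auto

lemma sep_rate_ge:
  assumes D: "\<And>r. exp (real r) \<le> real D * real (card (B (D * r)))" and "0 \<le> \<delta>" and "1 \<le> n"
  shows "ereal (real (nat \<lfloor>\<delta>\<rfloor>) / real D - (1 + ln (real D) + ln (real (card (B (nat \<lceil>R\<rceil>))))) / real n)
    \<le> sep_rate G S \<delta> R n"
proof -
  define M where "M = real (card (B (nat \<lceil>R\<rceil>)))"
  define r where "r = n * nat \<lfloor>\<delta>\<rfloor> div D"
  have "1 \<le> D" using D[of 0] by (simp add: word_ball_0)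
  have M: "1 \<le> M" unfolding M_def using card_word_ball_pos by simp
  obtain P where P: "finite P" "P \<subseteq> delta_paths G S n \<delta> \<one>" "path_separated G S n R P"
      "card (B (n * nat \<lfloor>\<delta>\<rfloor>)) \<le> card P * card (B (nat \<lceil>R\<rceil>))"
    using separated_delta_paths_exist[OF \<open>0 \<le> \<delta>\<close>] by blast
  have "card (B (D * r)) \<le> card (B (n * nat \<lfloor>\<delta>\<rfloor>))"
    unfolding r_def by (intro card_word_ball_mono times_div_less_eq_dividend)
  then have "real (card (B (D * r))) \<le> real (card P) * M"
    using P(4) unfolding M_def by (metis of_nat_le_iff of_nat_mult order_trans)
  then have "exp (real r) \<le> real D * (real (card P) * M)"
    using D[of r] by (meson mult_left_mono of_nat_0_le_iff order_trans)
  then have "exp (real r) / (real D * M) \<le> real (card P)"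
    using \<open>1 \<le> D\<close> M by (simp add: pos_divide_le_eq mult.commute mult.left_commute)
  then have "ereal (exp (real r) / (real D * M)) \<le> ereal (real (card P))" by simp
  also have "\<dots> \<le> sep_count G S n R \<delta> \<one>" by (rule card_le_sep_count[OF P(1-3)])
  finally have "ereal (exp (real r) / (real D * M)) \<le> sep_count G S n R \<delta> \<one>" .
  then have "ereal (ln (exp (real r) / (real D * M))) \<le> eln (sep_count G S n R \<delta> \<one>)"
    using \<open>1 \<le> D\<close> M by (intro eln_ge) auto
  also have "ln (exp (real r) / (real D * M)) = real r - ln (real D) - ln M"
    using \<open>1 \<le> D\<close> M by (simp add: ln_div ln_mult)
  finally have lower: "ereal (real r - ln (real D) - ln M) \<le> eln (sep_count G S n R \<delta> \<one>)" .
  have "real (n * nat \<lfloor>\<delta>\<rfloor>) / real D - 1 \<le> real r"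
    using real_of_int_floor_gt_diff_one[of "real (n * nat \<lfloor>\<delta>\<rfloor>) / real D"]
    unfolding r_def floor_divide_of_nat_eq by simp
  then have "ereal (real (n * nat \<lfloor>\<delta>\<rfloor>) / real D - 1 - ln (real D) - ln M)
      \<le> ereal (real r - ln (real D) - ln M)"
    by simp
  also note lower
  finally have "ereal (real (n * nat \<lfloor>\<delta>\<rfloor>) / real D - 1 - ln (real D) - ln M)
      \<le> eln (sep_count G S n R \<delta> \<one>)" .
  then have "ereal (real (n * nat \<lfloor>\<delta>\<rfloor>) / real D - 1 - ln (real D) - ln M) / ereal (real n)
      \<le> sep_rate G S \<delta> R n"
    unfolding sep_rate_def using \<open>1 \<le> n\<close> by (intro ereal_divide_right_mono) auto
  then show ?thesis
    using \<open>1 \<le> n\<close> unfolding M_def by (simp add: field_simps)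
qed

lemma sep_growth_ge:
  assumes D: "\<And>r. exp (real r) \<le> real D * real (card (B (D * r)))" and "0 \<le> \<delta>"
  shows "ereal (real (nat \<lfloor>\<delta>\<rfloor>) / real D) \<le> sep_growth G S \<delta> R"
proof -
  define C where "C = 1 + ln (real D) + ln (real (card (B (nat \<lceil>R\<rceil>))))"
  have "(\<lambda>n. C / real n) \<longlonglongrightarrow> 0"
    by (intro tendsto_divide_0[OF tendsto_const] filterlim_at_top_imp_at_infinity
        filterlim_real_sequentially)
  then have "(\<lambda>n. ereal (real (nat \<lfloor>\<delta>\<rfloor>) / real D - C / real n))
      \<longlonglongrightarrow> ereal (real (nat \<lfloor>\<delta>\<rfloor>) / real D)"
    by (intro tendsto_ereal) (auto intro: tendsto_eq_intros)
  then have "ereal (real (nat \<lfloor>\<delta>\<rfloor>) / real D)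
      = limsup (\<lambda>n. ereal (real (nat \<lfloor>\<delta>\<rfloor>) / real D - C / real n))"
    by (rule sym[OF lim_imp_Limsup[OF sequentially_bot]])
  also have "\<dots> \<le> sep_growth G S \<delta> R"
    unfolding sep_growth_def C_def using sep_rate_ge[OF D \<open>0 \<le> \<delta>\<close>]
    by (intro Limsup_mono eventually_mono[OF eventually_ge_at_top[of 1]]) auto
  finally show ?thesis .
qed

lemma INF_sep_growth_le_inverse:
  assumes slow: "\<And>D. \<exists>r. real D * real (card (B (D * r))) < exp (real r)"
    and "0 < \<delta>" and "1 \<le> m"
  shows "(INF R. sep_growth G S \<delta> R) \<le> ereal (1 / real m)"
proof -
  define c where "c = nat \<lceil>\<delta>\<rceil>"
  have "1 \<le> c" using \<open>0 < \<delta>\<close> unfolding c_def by linarith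
  obtain r where r: "real (c * m) * real (card (B (c * m * r))) < exp (real r)"
    using slow[of "c * m"] by blast
  define N where "N = real (card (B (c * m * r)))"
  have N: "1 \<le> N" unfolding N_def using card_word_ball_pos by simp
  have "1 \<le> c * m" using \<open>1 \<le> c\<close> \<open>1 \<le> m\<close> by simp
  then have "1 \<le> real (c * m)" by (metis of_nat_1 of_nat_le_iff)
  then have "N \<le> real (c * m) * N" using mult_right_mono[of 1 "real (c * m)" N] N by simp
  then have "N < exp (real r)" using r unfolding N_def by linarith
  then have "ln N < ln (exp (real r))" using N by (intro ln_less_cancel_iff[THEN iffD2]) auto
  then have lnN: "ln N < real r" by simp
  moreover have "0 \<le> ln N" using N by simp
  ultimately have "1 \<le> r" by simp
  define k where "k = m * r"
  have "1 \<le> k" unfolding k_def using \<open>1 \<le> m\<close> \<open>1 \<le> r\<close> by simp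
  have "ln N / real k \<le> real r / real k"
    using lnN by (intro divide_right_mono) auto
  also have "\<dots> = 1 / real m" unfolding k_def using \<open>1 \<le> r\<close> by simp
  finally have bound: "ln N / real k \<le> 1 / real m" .
  have "k * c = c * m * r" unfolding k_def by simp
  moreover have "sep_growth G S \<delta> (real (2 * k * c)) \<le> ereal (ln (real (card (B (k * c)))) / real k)"
    using sep_growth_le[OF \<open>1 \<le> k\<close> \<open>0 < \<delta>\<close>, of "real (2 * k * c)"] unfolding c_def by simp
  ultimately have growth: "sep_growth G S \<delta> (real (2 * k * c)) \<le> ereal (ln N / real k)"
    unfolding N_def by (simp only:)
  have "(INF R. sep_growth G S \<delta> R) \<le> sep_growth G S \<delta> (real (2 * k * c))"
    by (rule INF_lower) simp
  also note growth
  also have "ereal (ln N / real k) \<le> ereal (1 / real m)" using bound by simp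
  finally show ?thesis .
qed

lemma INF_sep_growth_eq_0:
  assumes slow: "\<And>D. \<exists>r. real D * real (card (B (D * r))) < exp (real r)" and "0 < \<delta>"
  shows "(INF R. sep_growth G S \<delta> R) = 0"
proof (rule antisym)
  show "(INF R. sep_growth G S \<delta> R) \<le> 0"
  proof (rule tendsto_lowerbound)
    show "(\<lambda>m. ereal (1 / real m)) \<longlonglongrightarrow> 0"
      using tendsto_ereal[OF lim_1_over_n] by (simp add: zero_ereal_def)
    show "\<forall>\<^sub>F m in sequentially. (INF R. sep_growth G S \<delta> R) \<le> ereal (1 / real m)"
      by (intro eventually_mono[OF eventually_ge_at_top[of 1]] INF_sep_growth_le_inverse[OF slow \<open>0 < \<delta>\<close>])
  qed simp
  show "0 \<le> (INF R. sep_growth G S \<delta> R)"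
    using \<open>0 < \<delta>\<close> by (intro INF_greatest sep_growth_nonneg) simp
qed

lemma coarse_entropy_eq_PInf:
  assumes "exponential_growth G S"
  shows "coarse_entropy G S = \<infinity>"
proof -
  obtain D where D: "\<And>r. exp (real r) \<le> real D * real (card (B (D * r)))"
    using assms exponential_growth_iff by blast
  have "((\<lambda>\<delta>. Lim at_top (sep_growth G S \<delta>)) \<longlongrightarrow> \<infinity>) at_top"
    unfolding tendsto_PInfty
  proof
    fix x :: real
    have "ereal x < Lim at_top (sep_growth G S \<delta>)" if "real D * (\<bar>x\<bar> + 1) + 1 \<le> \<delta>" for \<delta>
    proof -
      have "1 \<le> D" using D[of 0] by (simp add: word_ball_0)
      have "0 \<le> real D * (\<bar>x\<bar> + 1)" by simp
      then have "0 \<le> \<delta>" using that by linarith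
      have "real D * x \<le> real D * \<bar>x\<bar>" by (intro mult_left_mono) auto
      moreover have "real D * \<bar>x\<bar> < real D * (\<bar>x\<bar> + 1)" using \<open>1 \<le> D\<close> by simp
      moreover have "\<delta> - 1 < real (nat \<lfloor>\<delta>\<rfloor>)" using \<open>0 \<le> \<delta>\<close> by linarith
      ultimately have "real D * x < real (nat \<lfloor>\<delta>\<rfloor>)" using that by linarith
      then have "ereal x < ereal (real (nat \<lfloor>\<delta>\<rfloor>) / real D)"
        using \<open>1 \<le> D\<close> by (simp add: pos_less_divide_eq mult.commute)
      also have "\<dots> \<le> (INF R. sep_growth G S \<delta> R)"
        using sep_growth_ge[OF D \<open>0 \<le> \<delta>\<close>] by (rule INF_greatest)
      finally show ?thesis using Lim_sep_growth[OF \<open>0 \<le> \<delta>\<close>] by simp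
    qed
    then show "\<forall>\<^sub>F \<delta> in at_top. ereal x < Lim at_top (sep_growth G S \<delta>)"
      by (rule eventually_mono[OF eventually_ge_at_top])
  qed
  then show ?thesis unfolding coarse_entropy_sep_growth by (intro tendsto_Lim) simp_all
qed

lemma coarse_entropy_eq_0:
  assumes "\<not> exponential_growth G S"
  shows "coarse_entropy G S = 0"
proof -
  have slow: "\<exists>r. real D * real (card (B (D * r))) < exp (real r)" for D
    using assms exponential_growth_iff by (auto simp: not_le)
  have "\<forall>\<^sub>F \<delta> in at_top. Lim at_top (sep_growth G S \<delta>) = 0"
    using Lim_sep_growth INF_sep_growth_eq_0[OF slow]
    by (intro eventually_mono[OF eventually_gt_at_top[of 0]]) simp
  then have "((\<lambda>\<delta>. Lim at_top (sep_growth G S \<delta>)) \<longlongrightarrow> 0) at_top"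
    by (rule tendsto_eventually)
  then show ?thesis unfolding coarse_entropy_sep_growth by (intro tendsto_Lim) simp_all
qed

end

theorem mainTheorem18:
  fixes G :: "('a, 'b) monoid_scheme" and S :: "'a set"
  assumes "group G" and "finite S" and "S \<subseteq> carrier G" and "generate G S = carrier G"
  shows "(exponential_growth G S \<longleftrightarrow> coarse_entropy G S = \<infinity>) \<and>
         (\<not> exponential_growth G S \<longrightarrow> coarse_entropy G S = 0)"
proof -
  interpret word_metric G S
    using assms by (simp add: word_metric_def word_metric_axioms_def)
  show ?thesis using coarse_entropy_eq_PInf coarse_entropy_eq_0 by force
qed

end
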